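(* For $k\in\mathbb{N}$ let $A(k)=\dfrac{3^{2k+3}-32k^3-96k^2-88k-27}{4\,(2k+3)!}$. (i) For every $x\in(0,\pi/2)$ and every $n\in\mathbb{N}$, $$\sum_{k=2}^{2n}(-1)^{k+1}A(k)\,x^{2k}<\cos x-\Big(\frac{\sin x}{x}\Big)^{3}<\sum_{k=2}^{2n+1}(-1)^{k+1}A(k)\,x^{2k}.$$ (ii) For every $x\in(0,\pi/2)$ and every $m\in\mathbb{N}$, $$\Big|\cos x-\Big(\frac{\sin x}{x}\Big)^{3}-\sum_{k=1}^{m}(-1)^{k+1}A(k)\,x^{2k}\Big|<A(m+1)\,x^{2m+2}.$$
   Context: $\mathbb{N}=\{1,2,3,\dots\}$. *)

theory Defs
  imports Complex_Main
begin

definition A :: "nat \<Rightarrow> real" where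
  "A k = (3 ^ (2*k+3) - 32 * real k ^ 3 - 96 * real k ^ 2 - 88 * real k - 27)
          / (4 * fact (2*k+3))"

end

theory Submission
  imports Defs
begin

text \<open>Since \<open>sin x ^ 3 = (3 sin x - sin (3 x)) / 4\<close>, the function \<open>cos x - (sin x / x)^3\<close>
  has the power series \<open>\<Sum>k. (-1)^(k+1) A k x^(2k)\<close> with \<open>A 0 = A 1 = 0\<close>. For \<open>k \<ge> 2\<close>
  the coefficients are positive with \<open>4 A (k+1) < A k\<close>, so for \<open>0 < x < pi/2 < 2\<close> the terms
  \<open>A k x^(2k)\<close> decrease strictly. The strict Leibniz estimate then says that every
  truncation error has the sign of the first omitted term and is smaller than it.\<close>


lemma alternating_sum_strict_bounds:
  fixes b :: "nat \<Rightarrow> real"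
  assumes "b \<longlonglongrightarrow> 0" and "\<And>n. 0 \<le> b n" and "\<And>n. b (Suc n) < b n"
  shows "0 < (\<Sum>i. (-1)^i * b i)" and "(\<Sum>i. (-1)^i * b i) < b 0"
proof -
  have dec: "\<And>n. b (Suc n) \<le> b n" using assms(3) less_imp_le by blast
  have "b 0 - b 1 \<le> (\<Sum>i. (-1)^i * b i)"
    using summable_Leibniz'(2)[OF assms(1,2) dec, of 1] by (simp add: numeral_2_eq_2)
  then show "0 < (\<Sum>i. (-1)^i * b i)" using assms(3)[of 0] by simp
  have "(\<Sum>i. (-1)^i * b i) \<le> b 0 - b 1 + b 2"
    using summable_Leibniz'(4)[OF assms(1,2) dec, of 1] by (simp add: numeral_3_eq_3 numeral_2_eq_2)
  then show "(\<Sum>i. (-1)^i * b i) < b 0" using assms(3)[of 1] by (simp add: numeral_2_eq_2)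
qed

lemma alternating_remainder_bounds:
  fixes a :: "nat \<Rightarrow> real"
  assumes sums: "(\<lambda>k. (-1)^k * a k) sums s"
    and nonneg: "\<And>k. N \<le> k \<Longrightarrow> 0 \<le> a k" and decr: "\<And>k. N \<le> k \<Longrightarrow> a (Suc k) < a k"
  shows "0 < (-1)^N * (s - (\<Sum>k<N. (-1)^k * a k))"
    and "(-1)^N * (s - (\<Sum>k<N. (-1)^k * a k)) < a N"
proof -
  define b where "b i = a (i + N)" for i
  have "(\<lambda>k. (-1)^k * a k) \<longlonglongrightarrow> 0"
    using sums summable_LIMSEQ_zero sums_summable by blast
  then have "(\<lambda>k. \<bar>a k\<bar>) \<longlonglongrightarrow> 0"
    by (subst (asm) tendsto_rabs_zero_iff[symmetric]) (simp add: abs_mult)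
  then have "a \<longlonglongrightarrow> 0"
    by (simp add: tendsto_rabs_zero_iff)
  then have b0: "b \<longlonglongrightarrow> 0"
    unfolding b_def by (rule LIMSEQ_ignore_initial_segment)
  have "(\<lambda>i. (-1)^N * ((-1)^(i + N) * a (i + N))) sums ((-1)^N * (s - (\<Sum>k<N. (-1)^k * a k)))"
    using sums_split_initial_segment[OF sums] by (rule sums_mult)
  then have "(\<lambda>i. (-1)^i * b i) sums ((-1)^N * (s - (\<Sum>k<N. (-1)^k * a k)))"
    by (simp add: b_def power_add mult_ac)
  then have rem: "(-1)^N * (s - (\<Sum>k<N. (-1)^k * a k)) = (\<Sum>i. (-1)^i * b i)"
    by (rule sums_unique)
  show "0 < (-1)^N * (s - (\<Sum>k<N. (-1)^k * a k))"
    "(-1)^N * (s - (\<Sum>k<N. (-1)^k * a k)) < a N"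
    unfolding rem using alternating_sum_strict_bounds[OF b0] nonneg decr by (simp_all add: b_def)
qed

lemma sin_cube: "sin x ^ 3 = (3 * sin x - sin (3 * x)) / 4"
  for x :: real
proof -
  have "sin (3 * x) = sin (2 * x + x)" by simp
  also have "\<dots> = 2 * sin x * cos x ^ 2 + (cos x ^ 2 - sin x ^ 2) * sin x"
    unfolding sin_add sin_double cos_double by (simp add: power2_eq_square)
  also have "\<dots> = 3 * sin x - 4 * sin x ^ 3"
    unfolding cos_squared_eq by (simp add: power2_eq_square power3_eq_cube algebra_simps)
  finally show ?thesis by simp
qed

lemma sinc_cube_sums:
  fixes x :: real
  assumes "x \<noteq> 0"
  shows "(\<lambda>k. (-1)^k * ((3^(2*k+3) - 3) / (4 * fact (2*k+3))) * x^(2*k)) sums (sin x / x)^3"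
proof -
  define c where "c n = (-1)^n / fact (2*n+1) * (3 * x^(2*n+1) - (3*x)^(2*n+1)) / 4" for n
  have "(\<lambda>n. 3 * ((-1)^n / fact (2*n+1) * x^(2*n+1)) - (-1)^n / fact (2*n+1) * (3*x)^(2*n+1))
      sums (3 * sin x - sin (3 * x))"
    by (intro sums_diff sums_mult sin_paired)
  then have "c sums ((3 * sin x - sin (3 * x)) / 4)"
    unfolding c_def by (auto dest: sums_divide[where c = 4] simp: algebra_simps)
  then have "(\<lambda>k. c (Suc k)) sums (sin x ^ 3)"
    by (subst sums_Suc_iff) (simp add: c_def sin_cube)
  then have "(\<lambda>k. c (Suc k) / x^3) sums (sin x ^ 3 / x^3)"
    by (rule sums_divide)
  moreover have "c (Suc k) / x^3 = (-1)^k * ((3^(2*k+3) - 3) / (4 * fact (2*k+3))) * x^(2*k)" for k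
  proof -
    have "c (Suc k) = - ((-1)^k / fact (2*k+3) * (3 * x^(2*k+3) - (3*x)^(2*k+3)) / 4)"
      unfolding c_def by (simp add: numeral_3_eq_3)
    moreover have "(3*x)^(2*k+3) = 3^(2*k+3) * (x^(2*k) * x^3)" "x^(2*k+3) = x^(2*k) * x^3"
      by (simp_all add: power_mult_distrib power_add mult_ac)
    ultimately show ?thesis
      using assms by (simp add: field_simps del: fact_Suc)
  qed
  ultimately show ?thesis by (simp add: power_divide)
qed

lemma fact_add_3: "(fact (n+3) :: real) = fact n * ((real n+1) * (real n+2) * (real n+3))"
  by (simp add: numeral_3_eq_3 numeral_2_eq_2 algebra_simps)

lemma A_eq: "A k = (3^(2*k+3) - 3) / (4 * fact (2*k+3)) - 1 / fact (2*k)"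
proof -
  define q where "q = (2 * real k + 1) * (2 * real k + 2) * (2 * real k + 3)"
  have "0 < q" unfolding q_def by simp
  have "A k = (3^(2*k+3) - (4 * q + 3)) / (4 * (fact (2*k) * q))"
    unfolding A_def fact_add_3 q_def by (simp add: algebra_simps power2_eq_square power3_eq_cube)
  also have "\<dots> = (3^(2*k+3) - 3) / (4 * (fact (2*k) * q)) - 1 / fact (2*k)"
    using \<open>0 < q\<close> by (simp add: field_simps del: fact_Suc)
  finally show ?thesis
    unfolding fact_add_3 q_def by (simp add: algebra_simps)
qed

lemma cos_minus_sinc_cube_sums:
  fixes x :: real
  assumes "x \<noteq> 0"
  shows "(\<lambda>k. (-1)^(k+1) * A k * x^(2*k)) sums (cos x - (sin x / x)^3)"
proof -
  have "(\<lambda>k. (-1)^k / fact (2*k) * x^(2*k) - (-1)^k * ((3^(2*k+3) - 3) / (4 * fact (2*k+3))) * x^(2*k))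
      sums (cos x - (sin x / x)^3)"
    by (intro sums_diff cos_paired sinc_cube_sums assms)
  moreover have "(-1)^k / fact (2*k) * x^(2*k) - (-1)^k * ((3^(2*k+3) - 3) / (4 * fact (2*k+3))) * x^(2*k)
      = (-1)^(k+1) * A k * x^(2*k)" for k
    unfolding A_eq by (simp add: field_simps del: fact_Suc)
  ultimately show ?thesis by simp
qed

definition A_cubic :: "nat \<Rightarrow> nat" where
  "A_cubic k = 32 * k^3 + 96 * k^2 + 88 * k + 27"

lemma A_eq_cubic: "A k = (3^(2*k+3) - real (A_cubic k)) / (4 * fact (2*k+3))"
  unfolding A_def A_cubic_def by simp

lemma A_cubic_pos: "0 < A_cubic k"
  by (simp add: A_cubic_def)

lemma A_cubic_Suc_le: "A_cubic (Suc k) \<le> 9 * A_cubic k"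
  unfolding A_cubic_def by (simp add: power3_eq_cube power2_eq_square algebra_simps)

lemma two_A_cubic_le: "2 \<le> k \<Longrightarrow> 2 * A_cubic k \<le> 3^(2*k+3)"
proof (induction k rule: dec_induct)
  case base
  then show ?case by (simp add: A_cubic_def)
next
  case (step k)
  have "2 * A_cubic (Suc k) \<le> 9 * (2 * A_cubic k)" using A_cubic_Suc_le[of k] by simp
  also have "\<dots> \<le> 9 * 3^(2*k+3)" using step.IH by simp
  also have "\<dots> = 3^(2 * Suc k + 3)" by (simp add: power_add)
  finally show ?case .
qed

lemma two_A_cubic_le_real: "2 \<le> k \<Longrightarrow> 2 * real (A_cubic k) \<le> 3^(2*k+3)"
  using two_A_cubic_le[of k] by (metis of_nat_le_iff of_nat_mult of_nat_numeral of_nat_power)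

lemma A_pos: "2 \<le> k \<Longrightarrow> 0 < A k"
proof -
  assume "2 \<le> k"
  moreover have "0 < real (A_cubic k)" using A_cubic_pos by simp
  ultimately have "real (A_cubic k) < 3^(2*k+3)"
    using two_A_cubic_le_real[of k] by linarith
  then show ?thesis unfolding A_eq_cubic by simp
qed

lemma A_Suc_less: "2 \<le> k \<Longrightarrow> 4 * A (Suc k) < A k"
proof -
  assume k: "2 \<le> k"
  define t :: real where "t = 3^(2*k+3)"
  define p p' :: real where "p = A_cubic k" and "p' = A_cubic (Suc k)"
  define q :: real where "q = (2*real k+4) * (2*real k+5)"
  have "(8::real) * 9 \<le> q" unfolding q_def using k by (intro mult_mono) auto
  have "2 * Suc k + 3 = Suc (Suc (2*k+3))" by simp
  then have fact_step: "(fact (2 * Suc k + 3) :: real) = fact (2*k+3) * q"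
    unfolding q_def by (simp only: fact_Suc) (simp add: algebra_simps)
  have "2 * p \<le> t" unfolding t_def p_def using two_A_cubic_le_real[OF k] .
  have "0 < p" "0 < p'" unfolding p_def p'_def using A_cubic_pos by simp_all
  have "4 * (9 * t - p') < 36 * t" using \<open>0 < p'\<close> by simp
  also have "\<dots> \<le> (t - p) * 72" using \<open>2 * p \<le> t\<close> by simp
  also have "\<dots> \<le> (t - p) * q"
    using \<open>2 * p \<le> t\<close> \<open>0 < p\<close> \<open>8 * 9 \<le> q\<close> by (intro mult_left_mono) auto
  finally have "4 * (9 * t - p') < (t - p) * q" .
  then have "4 * (9 * t - p') / (4 * (fact (2*k+3) * q)) < (t - p) * q / (4 * (fact (2*k+3) * q))"
    using \<open>8 * 9 \<le> q\<close> by (intro divide_strict_right_mono) auto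
  then show ?thesis
    using \<open>8 * 9 \<le> q\<close> unfolding A_eq_cubic fact_step
    by (simp add: t_def p_def p'_def power_add)
qed

lemma A_eq_0: "k < 2 \<Longrightarrow> A k = 0"
  by (auto simp: A_def less_2_cases_iff)

lemma cos_minus_sinc_cube_remainder:
  fixes x :: real
  assumes x: "0 < x" "x < pi/2" and N: "2 \<le> N"
  defines "R \<equiv> (-1)^N * ((\<Sum>k<N. (-1)^(k+1) * A k * x^(2*k)) - (cos x - (sin x / x)^3))"
  shows "0 < R" and "R < A N * x^(2*N)"
proof -
  define a where "a k = A k * x^(2*k)" for k
  have "x < 2" using x pi_less_4 by simp
  then have "x^2 < 4" using power_strict_mono[of x 2 2] x by simp
  have "(\<lambda>k. - ((-1)^(k+1) * A k * x^(2*k))) sums (- (cos x - (sin x / x)^3))"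
    using cos_minus_sinc_cube_sums x by (intro sums_minus) simp
  then have sums: "(\<lambda>k. (-1)^k * a k) sums (- (cos x - (sin x / x)^3))"
    by (simp add: a_def mult.assoc)
  have pos: "0 \<le> a k" if "N \<le> k" for k
    using A_pos[of k] that N x by (simp add: a_def)
  have decr: "a (Suc k) < a k" if "N \<le> k" for k
  proof -
    have "A (Suc k) * x^2 \<le> A (Suc k) * 4"
      using A_pos[of "Suc k"] that N \<open>x^2 < 4\<close> by (intro mult_left_mono) auto
    also have "\<dots> < A k" using A_Suc_less[of k] that N by simp
    finally have "A (Suc k) * x^2 * x^(2*k) < A k * x^(2*k)"
      using x by (intro mult_strict_right_mono) auto
    moreover have "x^(2 * Suc k) = x^2 * x^(2*k)" by (simp add: power2_eq_square)
    ultimately show ?thesis by (simp only: a_def mult.assoc)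
  qed
  have "R = (-1)^N * (- (cos x - (sin x / x)^3) - (\<Sum>k<N. (-1)^k * a k))"
    by (simp add: R_def a_def sum_negf[symmetric] mult.assoc)
  then show "0 < R" and "R < A N * x^(2*N)"
    using alternating_remainder_bounds[OF sums pos decr] by (simp_all add: a_def)
qed

theorem theorem1:
  shows "(\<forall>(x::real) (n::nat). 0 < x \<and> x < pi/2 \<and> n \<ge> 1 \<longrightarrow>
            (\<Sum>k=2..2*n. (-1)^(k+1) * A k * x^(2*k)) < cos x - (sin x / x)^3 \<and>
            cos x - (sin x / x)^3 < (\<Sum>k=2..2*n+1. (-1)^(k+1) * A k * x^(2*k)))
       \<and> (\<forall>(x::real) (m::nat). 0 < x \<and> x < pi/2 \<and> m \<ge> 1 \<longrightarrow>
            \<bar>cos x - (sin x / x)^3 - (\<Sum>k=1..m. (-1)^(k+1) * A k * x^(2*k))\<bar>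
              < A (m+1) * x^(2*m+2))"
proof (intro conjI allI impI)
  fix x :: real and n :: nat
  assume x: "0 < x \<and> x < pi/2 \<and> n \<ge> 1"
  have "(\<Sum>k=2..M. (-1)^(k+1) * A k * x^(2*k)) = (\<Sum>k<Suc M. (-1)^(k+1) * A k * x^(2*k))" for M
    by (intro sum.mono_neutral_left) (auto simp: A_eq_0)
  with cos_minus_sinc_cube_remainder(1)[of x "2*n+1"] cos_minus_sinc_cube_remainder(1)[of x "2*n+2"] x
  show "(\<Sum>k=2..2*n. (-1)^(k+1) * A k * x^(2*k)) < cos x - (sin x / x)^3"
    and "cos x - (sin x / x)^3 < (\<Sum>k=2..2*n+1. (-1)^(k+1) * A k * x^(2*k))"
    by simp_all
next
  fix x :: real and m :: nat
  assume x: "0 < x \<and> x < pi/2 \<and> m \<ge> 1"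
  define f where "f = cos x - (sin x / x)^3"
  define S where "S = (\<Sum>k<m+1. (-1)^(k+1) * A k * x^(2*k))"
  have "(\<Sum>k=1..m. (-1)^(k+1) * A k * x^(2*k)) = S"
    unfolding S_def by (intro sum.mono_neutral_left) (auto simp: A_eq_0)
  moreover have "\<bar>f - S\<bar> = \<bar>(-1)^(m+1) * (S - f)\<bar>"
    by (simp add: abs_mult)
  moreover have "\<bar>(-1)^(m+1) * (S - f)\<bar> < A (m+1) * x^(2*(m+1))"
    using cos_minus_sinc_cube_remainder[of x "m+1"] x unfolding S_def f_def by simp
  ultimately show "\<bar>cos x - (sin x / x)^3 - (\<Sum>k=1..m. (-1)^(k+1) * A k * x^(2*k))\<bar> < A (m+1) * x^(2*m+2)"
    unfolding f_def by (simp add: mult_2_right)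
qed

end
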